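(* Let $X$ be a locally connected topological space. Then the functor $U\mapsto\pi_0(U)$ (the set of connected components of $U$) is a terminal object of the category of cosheaves of sets on $X$.
   Context: $\mathfrak{Off}(X)$ is the poset of open subsets of $X$ viewed as a category; for $V\subseteq U$ open, $\pi_0(V)\to\pi_0(U)$ sends a component of $V$ to the component of $U$ containing it. A functor $G:\mathfrak{Off}(X)\to\mathbf{Sets}$ is a cosheaf if for every open $U$ and every open covering $U=\bigcup_iU_i$, the map $\coprod_iG(U_i)\to G(U)$ exhibits $G(U)$ as the coequaliser of the two maps $\coprod_{i,j}G(U_i\cap U_j)\rightrightarrows\coprod_iG(U_i)$ induced by the inclusions. The category of cosheaves of sets on $X$ has as morphisms the natural transformations. *)

theory Defs
  imports "HOL-Analysis.Analysis"
begin

definition copresheaf_on :: "'a topology \<Rightarrow> ('a set \<Rightarrow> 'b set) \<Rightarrow> ('a set \<Rightarrow> 'a set \<Rightarrow> 'b \<Rightarrow> 'b) \<Rightarrow> bool" where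
  "copresheaf_on X G Gm \<longleftrightarrow>
     (\<forall>U V. openin X U \<and> openin X V \<and> V \<subseteq> U \<longrightarrow> Gm V U \<in> G V \<rightarrow> G U) \<and>
     (\<forall>U. openin X U \<longrightarrow> (\<forall>s\<in>G U. Gm U U s = s)) \<and>
     (\<forall>U V W. openin X U \<and> openin X V \<and> openin X W \<and> W \<subseteq> V \<and> V \<subseteq> U \<longrightarrow>
        (\<forall>s\<in>G W. Gm V U (Gm W V s) = Gm W U s))"

definition is_set_coequaliser :: "'x set \<Rightarrow> 'y set \<Rightarrow> ('x \<Rightarrow> 'y) \<Rightarrow> ('x \<Rightarrow> 'y) \<Rightarrow> 'z set \<Rightarrow> ('y \<Rightarrow> 'z) \<Rightarrow> bool" where
  "is_set_coequaliser A B f g C q \<longleftrightarrow>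
     f \<in> A \<rightarrow> B \<and> g \<in> A \<rightarrow> B \<and> q ` B = C \<and>
     (\<forall>b\<in>B. \<forall>b'\<in>B. q b = q b' \<longleftrightarrow>
        (b, b') \<in> ({(f a, g a) | a. a \<in> A} \<union> {(g a, f a) | a. a \<in> A})\<^sup>*)"

text \<open>Cosheaf condition for every open U and every open covering \<U> of U
  (coverings indexed by the set of their members; coproducts are dependent sums).\<close>
definition is_cosheaf :: "'a topology \<Rightarrow> ('a set \<Rightarrow> 'b set) \<Rightarrow> ('a set \<Rightarrow> 'a set \<Rightarrow> 'b \<Rightarrow> 'b) \<Rightarrow> bool" where
  "is_cosheaf X G Gm \<longleftrightarrow> copresheaf_on X G Gm \<and>
     (\<forall>U \<U>. openin X U \<and> (\<forall>V\<in>\<U>. openin X V) \<and> \<Union>\<U> = U \<longrightarrow>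
        is_set_coequaliser
          (SIGMA p:\<U> \<times> \<U>. G (fst p \<inter> snd p))
          (SIGMA V:\<U>. G V)
          (\<lambda>(p, s). (fst p, Gm (fst p \<inter> snd p) (fst p) s))
          (\<lambda>(p, s). (snd p, Gm (fst p \<inter> snd p) (snd p) s))
          (G U)
          (\<lambda>(V, s). Gm V U s))"

definition nat_trans_on :: "'a topology \<Rightarrow> ('a set \<Rightarrow> 'b set) \<Rightarrow> ('a set \<Rightarrow> 'a set \<Rightarrow> 'b \<Rightarrow> 'b)
    \<Rightarrow> ('a set \<Rightarrow> 'c set) \<Rightarrow> ('a set \<Rightarrow> 'a set \<Rightarrow> 'c \<Rightarrow> 'c) \<Rightarrow> ('a set \<Rightarrow> 'b \<Rightarrow> 'c) \<Rightarrow> bool" where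
  "nat_trans_on X G Gm H Hm \<eta> \<longleftrightarrow>
     (\<forall>U. openin X U \<longrightarrow> \<eta> U \<in> G U \<rightarrow> H U) \<and>
     (\<forall>U V. openin X U \<and> openin X V \<and> V \<subseteq> U \<longrightarrow>
        (\<forall>s\<in>G V. \<eta> U (Gm V U s) = Hm V U (\<eta> V s)))"

definition pi0 :: "'a topology \<Rightarrow> 'a set \<Rightarrow> 'a set set" where
  "pi0 X U = connected_components_of (subtopology X U)"

definition pi0_map :: "'a topology \<Rightarrow> 'a set \<Rightarrow> 'a set \<Rightarrow> 'a set \<Rightarrow> 'a set" where
  "pi0_map X V U C = (THE D. D \<in> pi0 X U \<and> C \<subseteq> D)"

end

theory Submission
  imports Defs
begin

text \<open>In a locally connected space the components of an open set U are open, so they form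
  an open cover of U by pairwise disjoint sets. Since a cosheaf G has G(\<emptyset>) = \<emptyset>, its cosheaf
  condition for this cover says that every section over U comes from a section over exactly one
  component D of U; sending it to D is a transformation G \<rightarrow> pi0, and it is the only one
  because pi0(D) = {D}. That pi0 is itself a cosheaf comes down to connectedness: two components
  of members of a cover that lie in the same component of U are linked by a chain of
  overlapping components.\<close>

lemma pi0_memD:
  assumes "C \<in> pi0 X U"
  shows "C \<noteq> {}" "C \<subseteq> U" "connectedin X C"
  using assms connected_components_of_subset[of C "subtopology X U"]
    nonempty_connected_components_of[of C] connectedin_connected_components_of[of C "subtopology X U"]
  unfolding pi0_def by (auto simp: connectedin_subtopology)

lemma Union_pi0: "\<Union>(pi0 X U) = topspace X \<inter> U"
  unfolding pi0_def Union_connected_components_of by simp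

lemma openin_pi0:
  "locally_connected_space X \<Longrightarrow> openin X U \<Longrightarrow> C \<in> pi0 X U \<Longrightarrow> openin X C"
  unfolding pi0_def using locally_connected_space_open_connected_components by blast

lemma pi0_maximal:
  assumes "D \<in> pi0 X U" "connectedin X S" "S \<subseteq> U" "S \<inter> D \<noteq> {}"
  shows "S \<subseteq> D"
  using assms connected_components_of_maximal[of D "subtopology X U" S]
  unfolding pi0_def by (auto simp: connectedin_subtopology disjnt_def)

lemma pi0_connected:
  assumes "connectedin X C" "C \<noteq> {}"
  shows "pi0 X C = {C}"
proof -
  have "C \<subseteq> topspace X" "connected_space (subtopology X C)"
    using assms(1) unfolding connectedin_def by auto
  moreover have "topspace (subtopology X C) = C"
    using \<open>C \<subseteq> topspace X\<close> by auto
  ultimately show ?thesis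
    using assms(2) unfolding pi0_def
    by (metis connected_components_of_eq_singleton null_topspace_iff_trivial)
qed

lemma pi0_map_eqI:
  assumes "D \<in> pi0 X U" "C \<subseteq> D" "C \<noteq> {}"
  shows "pi0_map X V U C = D"
  unfolding pi0_map_def
proof (rule the_equality)
  fix D' assume "D' \<in> pi0 X U \<and> C \<subseteq> D'"
  with assms show "D' = D"
    using connected_components_of_overlap unfolding pi0_def by blast
qed (use assms in blast)

lemma pi0_map_id: "C \<in> pi0 X U \<Longrightarrow> pi0_map X V U C = C"
  using pi0_map_eqI pi0_memD(1) by blast

lemma pi0_map_mem:
  assumes "connectedin X C" "C \<noteq> {}" "C \<subseteq> U"
  shows "pi0_map X V U C \<in> pi0 X U" "C \<subseteq> pi0_map X V U C"
proof -
  obtain x where "x \<in> C" using assms(2) by blast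
  moreover have "C \<subseteq> topspace X" using assms(1) connectedin_subset_topspace by blast
  ultimately obtain D where D: "D \<in> pi0 X U" "x \<in> D"
    using assms(3) Union_pi0[of X U] by blast
  with \<open>x \<in> C\<close> have "C \<subseteq> D" using pi0_maximal assms by blast
  then show "pi0_map X V U C \<in> pi0 X U" "C \<subseteq> pi0_map X V U C"
    using pi0_map_eqI[OF D(1) _ assms(2)] D(1) by simp_all
qed

lemma pi0_map_pi0:
  assumes "C \<in> pi0 X V" "V \<subseteq> U"
  shows "pi0_map X V U C \<in> pi0 X U" "C \<subseteq> pi0_map X V U C"
  using pi0_map_mem[OF pi0_memD(3,1)[OF assms(1)]] pi0_memD(2)[OF assms(1)] assms(2) by auto

lemma pi0_map_comp:
  assumes "C \<in> pi0 X W" "W \<subseteq> V" "V \<subseteq> U"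
  shows "pi0_map X V U (pi0_map X W V C) = pi0_map X W U C"
proof -
  let ?E = "pi0_map X W V C" and ?D = "pi0_map X W U C"
  have E: "?E \<in> pi0 X V" "C \<subseteq> ?E" and D: "?D \<in> pi0 X U" "C \<subseteq> ?D"
    using pi0_map_pi0[OF assms(1,2)] pi0_map_pi0[OF assms(1) subset_trans[OF assms(2,3)]] by auto
  have "?E \<inter> ?D \<noteq> {}"
    using E(2) D(2) pi0_memD(1)[OF assms(1)] by blast
  then have "?E \<subseteq> ?D"
    using pi0_maximal[OF D(1) pi0_memD(3)[OF E(1)]] pi0_memD(2)[OF E(1)] assms(3) by blast
  then show ?thesis
    using pi0_map_eqI[OF D(1) _ pi0_memD(1)[OF E(1)]] by blast
qed

lemma pi0_copresheaf: "copresheaf_on X (pi0 X) (pi0_map X)"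
  unfolding copresheaf_on_def
proof (intro conjI allI impI ballI Pi_I)
  fix U V C assume "openin X U \<and> openin X V \<and> V \<subseteq> U" "C \<in> pi0 X V"
  then show "pi0_map X V U C \<in> pi0 X U" using pi0_map_pi0(1) by blast
next
  fix U C assume "C \<in> pi0 X U"
  then show "pi0_map X U U C = C" by (rule pi0_map_id)
next
  fix U V W C assume "openin X U \<and> openin X V \<and> openin X W \<and> W \<subseteq> V \<and> V \<subseteq> U" "C \<in> pi0 X W"
  then show "pi0_map X V U (pi0_map X W V C) = pi0_map X W U C" using pi0_map_comp by blast
qed

lemma pi0_cover_point:
  assumes "x \<in> topspace X" "x \<in> \<Union>\<U>"
  obtains V C where "V \<in> \<U>" "C \<in> pi0 X V" "x \<in> C"
proof -
  obtain V where "V \<in> \<U>" "x \<in> V" using assms(2) by blast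
  with assms(1) show thesis
    using that Union_pi0[of X V] by blast
qed

lemma pi0_map_cover_surj:
  assumes "\<Union>\<U> = U" "D \<in> pi0 X U"
  obtains V C where "V \<in> \<U>" "C \<in> pi0 X V" "pi0_map X V U C = D"
proof -
  obtain x where "x \<in> D" using pi0_memD(1)[OF assms(2)] by blast
  then have "x \<in> topspace X" "x \<in> \<Union>\<U>"
    using assms Union_pi0[of X U] by blast+
  then obtain V C where VC: "V \<in> \<U>" "C \<in> pi0 X V" "x \<in> C"
    by (rule pi0_cover_point)
  have "C \<subseteq> D"
    using pi0_maximal[OF assms(2)] pi0_memD[OF VC(2)] VC(1,3) \<open>x \<in> D\<close> assms(1) by blast
  then show thesis
    using that[OF VC(1,2)] pi0_map_eqI[OF assms(2)] pi0_memD(1)[OF VC(2)] by blast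
qed

lemma rtrancl_invariant:
  assumes "(x, y) \<in> R\<^sup>*" "\<And>x y. (x, y) \<in> R \<Longrightarrow> h x = h y"
  shows "h x = h y"
  using assms(1) by induction (simp_all add: assms(2))

lemma is_set_coequaliserI:
  assumes "f \<in> A \<rightarrow> B" "g \<in> A \<rightarrow> B" "q ` B = C"
    and "\<And>a. a \<in> A \<Longrightarrow> q (f a) = q (g a)"
    and "\<And>b b'. b \<in> B \<Longrightarrow> b' \<in> B \<Longrightarrow> q b = q b' \<Longrightarrow>
           (b, b') \<in> ({(f a, g a) | a. a \<in> A} \<union> {(g a, f a) | a. a \<in> A})\<^sup>*"
  shows "is_set_coequaliser A B f g C q"
  unfolding is_set_coequaliser_def
proof (intro conjI ballI iffI)
  fix b b' assume "(b, b') \<in> ({(f a, g a) | a. a \<in> A} \<union> {(g a, f a) | a. a \<in> A})\<^sup>*"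
  then show "q b = q b'"
    by (rule rtrancl_invariant) (use assms(4) in auto)
qed (use assms in auto)

lemma is_set_coequaliser_image: "is_set_coequaliser A B f g C q \<Longrightarrow> q ` B = C"
  unfolding is_set_coequaliser_def by blast

lemma is_set_coequaliser_rtrancl:
  "is_set_coequaliser A B f g C q \<Longrightarrow> b \<in> B \<Longrightarrow> b' \<in> B \<Longrightarrow> q b = q b' \<Longrightarrow>
   (b, b') \<in> ({(f a, g a) | a. a \<in> A} \<union> {(g a, f a) | a. a \<in> A})\<^sup>*"
  unfolding is_set_coequaliser_def by blast

text \<open>The members reachable from b and the remaining ones cover D by two disjoint open sets.\<close>
lemma connectedin_cover_chain:
  assumes "connectedin X D" "D \<subseteq> (\<Union>c\<in>I. E c)" "\<And>c. c \<in> I \<Longrightarrow> openin X (E c)"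
    and overlap: "\<And>c c'. c \<in> I \<Longrightarrow> c' \<in> I \<Longrightarrow> E c \<inter> E c' \<inter> D \<noteq> {} \<Longrightarrow> (c, c') \<in> R\<^sup>*"
    and "b \<in> I" "b' \<in> I" "E b \<inter> D \<noteq> {}" "E b' \<inter> D \<noteq> {}"
  shows "(b, b') \<in> R\<^sup>*"
proof -
  define S where "S = (\<Union>c\<in>{c \<in> I. (b, c) \<in> R\<^sup>*}. E c)"
  define T where "T = (\<Union>c\<in>{c \<in> I. (b, c) \<notin> R\<^sup>*}. E c)"
  have "openin X S" "openin X T"
    unfolding S_def T_def using assms(3) by auto
  moreover have "D \<subseteq> S \<union> T"
    using assms(2) unfolding S_def T_def by blast
  moreover have "S \<inter> T \<inter> D = {}"
  proof (rule equals0I)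
    fix x assume "x \<in> S \<inter> T \<inter> D"
    then obtain c c' where "c \<in> I" "c' \<in> I" "(b, c) \<in> R\<^sup>*" "(b, c') \<notin> R\<^sup>*"
      "E c \<inter> E c' \<inter> D \<noteq> {}"
      unfolding S_def T_def by blast
    then show False
      using overlap rtrancl_trans by metis
  qed
  moreover have "S \<inter> D \<noteq> {}"
    unfolding S_def using assms(5,7) by blast
  ultimately have "D \<subseteq> S"
    using connectedinD[OF assms(1)] by blast
  with assms(8) obtain c where "c \<in> I" "(b, c) \<in> R\<^sup>*" "E c \<inter> E b' \<inter> D \<noteq> {}"
    unfolding S_def by blast
  then show ?thesis
    using overlap[OF _ assms(6)] rtrancl_trans by metis
qed

lemma pi0_common_refinement:
  assumes "E1 \<in> pi0 X W1" "E2 \<in> pi0 X W2" "x \<in> E1" "x \<in> E2"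
  obtains F where "F \<in> pi0 X (W1 \<inter> W2)"
    "pi0_map X (W1 \<inter> W2) W1 F = E1" "pi0_map X (W1 \<inter> W2) W2 F = E2"
proof -
  have "x \<in> topspace X \<inter> W1"
    using assms(1,3) Union_pi0[of X W1] by blast
  moreover have "x \<in> W2"
    using assms(2,4) pi0_memD(2) by blast
  ultimately have "x \<in> topspace X \<inter> (W1 \<inter> W2)"
    by blast
  then obtain F where F: "F \<in> pi0 X (W1 \<inter> W2)" "x \<in> F"
    using Union_pi0[of X "W1 \<inter> W2"] by blast
  have FW: "F \<subseteq> W1" "F \<subseteq> W2" and Fc: "connectedin X F" and Fne: "F \<noteq> {}"
    using pi0_memD[OF F(1)] by auto
  have "F \<subseteq> E1"
    using pi0_maximal[OF assms(1) Fc FW(1)] F(2) assms(3) by blast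
  moreover have "F \<subseteq> E2"
    using pi0_maximal[OF assms(2) Fc FW(2)] F(2) assms(4) by blast
  ultimately show thesis
    using that[OF F(1)] pi0_map_eqI[OF assms(1) _ Fne] pi0_map_eqI[OF assms(2) _ Fne] by blast
qed

lemma pi0_coequaliser:
  assumes lc: "locally_connected_space X" and U: "openin X U"
    and opens: "\<forall>V\<in>\<U>. openin X V" and cover: "\<Union>\<U> = U"
  shows "is_set_coequaliser
          (SIGMA p:\<U> \<times> \<U>. pi0 X (fst p \<inter> snd p))
          (SIGMA V:\<U>. pi0 X V)
          (\<lambda>(p, s). (fst p, pi0_map X (fst p \<inter> snd p) (fst p) s))
          (\<lambda>(p, s). (snd p, pi0_map X (fst p \<inter> snd p) (snd p) s))
          (pi0 X U)
          (\<lambda>(V, s). pi0_map X V U s)"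
    (is "is_set_coequaliser ?A ?B ?f ?g _ ?q")
proof (rule is_set_coequaliserI)
  have sub: "V \<subseteq> U" if "V \<in> \<U>" for V
    using that cover by blast
  show "?f \<in> ?A \<rightarrow> ?B" "?g \<in> ?A \<rightarrow> ?B"
    using pi0_map_pi0(1)[OF _ Int_lower1] pi0_map_pi0(1)[OF _ Int_lower2] by auto
  show "?q (?f a) = ?q (?g a)" if "a \<in> ?A" for a
    using that pi0_map_comp[OF _ Int_lower1 sub] pi0_map_comp[OF _ Int_lower2 sub] by auto
  show "?q ` ?B = pi0 X U"
  proof
    show "?q ` ?B \<subseteq> pi0 X U"
      using pi0_map_pi0(1)[OF _ sub] by auto
    show "pi0 X U \<subseteq> ?q ` ?B"
    proof
      fix D assume "D \<in> pi0 X U"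
      then obtain V C where "V \<in> \<U>" "C \<in> pi0 X V" "pi0_map X V U C = D"
        by (rule pi0_map_cover_surj[OF cover])
      then show "D \<in> ?q ` ?B"
        by (intro rev_image_eqI[of "(V, C)"]) auto
    qed
  qed
  show "(b, b') \<in> ({(?f a, ?g a) | a. a \<in> ?A} \<union> {(?g a, ?f a) | a. a \<in> ?A})\<^sup>*"
    if b: "b \<in> ?B" "b' \<in> ?B" "?q b = ?q b'" for b b'
  proof (rule connectedin_cover_chain[where E = snd and I = ?B])
    obtain V C V' C' where bb: "b = (V, C)" "b' = (V', C')"
      using prod.exhaust by metis
    then have B: "V \<in> \<U>" "C \<in> pi0 X V" "V' \<in> \<U>" "C' \<in> pi0 X V'"
      using b by auto
    define D where "D = ?q b"
    have D: "D \<in> pi0 X U" "C \<subseteq> D" "C' \<subseteq> D"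
      using pi0_map_pi0[OF B(2) sub[OF B(1)]] pi0_map_pi0(2)[OF B(4) sub[OF B(3)]] b(3) bb
      unfolding D_def by auto
    show "connectedin X D"
      using pi0_memD(3)[OF D(1)] .
    show "D \<subseteq> (\<Union>c\<in>?B. snd c)"
    proof
      fix x assume "x \<in> D"
      then have "x \<in> topspace X \<inter> U"
        using D(1) Union_pi0[of X U] by blast
      then obtain W E where "W \<in> \<U>" "E \<in> pi0 X W" "x \<in> E"
        using pi0_cover_point[of x X \<U>] cover by auto
      then show "x \<in> (\<Union>c\<in>?B. snd c)"
        by (intro UN_I[of "(W, E)"]) auto
    qed
    show "openin X (snd c)" if "c \<in> ?B" for c
      using that opens openin_pi0[OF lc] by auto
    show "snd b \<inter> D \<noteq> {}" "snd b' \<inter> D \<noteq> {}"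
      using D(2,3) pi0_memD(1)[OF B(2)] pi0_memD(1)[OF B(4)] bb by auto
    show "(c, c') \<in> ({(?f a, ?g a) | a. a \<in> ?A} \<union> {(?g a, ?f a) | a. a \<in> ?A})\<^sup>*"
      if overlap: "c \<in> ?B" "c' \<in> ?B" "snd c \<inter> snd c' \<inter> D \<noteq> {}" for c c'
    proof -
      obtain W1 E1 W2 E2 where c: "c = (W1, E1)" "c' = (W2, E2)"
        using prod.exhaust by metis
      then have E: "W1 \<in> \<U>" "W2 \<in> \<U>" "E1 \<in> pi0 X W1" "E2 \<in> pi0 X W2"
        using overlap(1,2) by auto
      obtain x where "x \<in> E1" "x \<in> E2"
        using overlap(3) c by auto
      obtain F where "F \<in> pi0 X (W1 \<inter> W2)"
        "pi0_map X (W1 \<inter> W2) W1 F = E1" "pi0_map X (W1 \<inter> W2) W2 F = E2"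
        using pi0_common_refinement[OF E(3,4) \<open>x \<in> E1\<close> \<open>x \<in> E2\<close>] .
      then have "((W1, W2), F) \<in> ?A" "(c, c') = (?f ((W1, W2), F), ?g ((W1, W2), F))"
        using c E by auto
      then show ?thesis by blast
    qed
  qed (use b in auto)
qed

lemma pi0_is_cosheaf: "locally_connected_space X \<Longrightarrow> is_cosheaf X (pi0 X) (pi0_map X)"
  unfolding is_cosheaf_def using pi0_copresheaf pi0_coequaliser by blast

lemma cosheaf_copresheaf: "is_cosheaf X G Gm \<Longrightarrow> copresheaf_on X G Gm"
  unfolding is_cosheaf_def by blast

lemma copresheaf_on_map_mem:
  "copresheaf_on X G Gm \<Longrightarrow> openin X U \<Longrightarrow> openin X V \<Longrightarrow> V \<subseteq> U \<Longrightarrow> t \<in> G V \<Longrightarrow> Gm V U t \<in> G U"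
  unfolding copresheaf_on_def by (meson Pi_mem)

lemma copresheaf_on_comp:
  "copresheaf_on X G Gm \<Longrightarrow> openin X U \<Longrightarrow> openin X V \<Longrightarrow> openin X W \<Longrightarrow> W \<subseteq> V \<Longrightarrow> V \<subseteq> U
   \<Longrightarrow> t \<in> G W \<Longrightarrow> Gm V U (Gm W V t) = Gm W U t"
  unfolding copresheaf_on_def by meson

lemma nat_trans_on_mem:
  "nat_trans_on X G Gm H Hm \<eta> \<Longrightarrow> openin X U \<Longrightarrow> s \<in> G U \<Longrightarrow> \<eta> U s \<in> H U"
  unfolding nat_trans_on_def by (meson Pi_mem)

lemma nat_trans_on_natural:
  "nat_trans_on X G Gm H Hm \<eta> \<Longrightarrow> openin X U \<Longrightarrow> openin X V \<Longrightarrow> V \<subseteq> U \<Longrightarrow> s \<in> G V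
   \<Longrightarrow> \<eta> U (Gm V U s) = Hm V U (\<eta> V s)"
  unfolding nat_trans_on_def by meson

lemma cosheaf_coequaliser:
  assumes "is_cosheaf X G Gm" "openin X U" "\<forall>V\<in>\<U>. openin X V" "\<Union>\<U> = U"
  shows "is_set_coequaliser
          (SIGMA p:\<U> \<times> \<U>. G (fst p \<inter> snd p))
          (SIGMA V:\<U>. G V)
          (\<lambda>(p, s). (fst p, Gm (fst p \<inter> snd p) (fst p) s))
          (\<lambda>(p, s). (snd p, Gm (fst p \<inter> snd p) (snd p) s))
          (G U)
          (\<lambda>(V, s). Gm V U s)"
  using assms unfolding is_cosheaf_def by blast

lemma cosheaf_empty: "is_cosheaf X G Gm \<Longrightarrow> G {} = {}"
  using is_set_coequaliser_image[OF cosheaf_coequaliser[of X G Gm "{}" "{}"]] by simp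

lemma disjoint_cover_gluing_fst:
  fixes \<C> :: "'a set set" and G :: "'a set \<Rightarrow> 'b set" and Gm :: "'a set \<Rightarrow> 'a set \<Rightarrow> 'b \<Rightarrow> 'b"
  defines "f \<equiv> \<lambda>(p, s). (fst p, Gm (fst p \<inter> snd p) (fst p) s)"
    and "g \<equiv> \<lambda>(p, s). (snd p, Gm (fst p \<inter> snd p) (snd p) s)"
    and "A \<equiv> SIGMA p:\<C> \<times> \<C>. G (fst p \<inter> snd p)"
  assumes "G {} = {}" "pairwise disjnt \<C>"
    and "(x, y) \<in> {(f a, g a) | a. a \<in> A} \<union> {(g a, f a) | a. a \<in> A}"
  shows "fst x = fst y"
proof -
  obtain a where a: "a \<in> A" "(x, y) = (f a, g a) \<or> (x, y) = (g a, f a)"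
    using assms(6) by blast
  obtain C1 C2 z where "a = ((C1, C2), z)"
    using prod.exhaust by metis
  with a have "C1 \<in> \<C>" "C2 \<in> \<C>" "z \<in> G (C1 \<inter> C2)"
    "(x, y) = (f ((C1, C2), z), g ((C1, C2), z)) \<or> (x, y) = (g ((C1, C2), z), f ((C1, C2), z))"
    unfolding A_def by auto
  moreover from this have "C1 = C2"
    using assms(4,5) unfolding pairwise_def disjnt_def by (metis empty_iff)
  ultimately show ?thesis
    unfolding f_def g_def by auto
qed

lemma cosheaf_section_component_unique:
  assumes lc: "locally_connected_space X" and G: "is_cosheaf X G Gm"
    and U: "openin X U" and s: "s \<in> G U"
  shows "\<exists>!D. D \<in> pi0 X U \<and> s \<in> Gm D U ` G D"
proof -
  let ?A = "SIGMA p:pi0 X U \<times> pi0 X U. G (fst p \<inter> snd p)"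
  let ?B = "SIGMA D:pi0 X U. G D"
  let ?f = "\<lambda>(p, s). (fst p, Gm (fst p \<inter> snd p) (fst p) s)"
  let ?g = "\<lambda>(p, s). (snd p, Gm (fst p \<inter> snd p) (snd p) s)"
  let ?q = "\<lambda>(D, t). Gm D U t"
  have "\<Union>(pi0 X U) = U"
    using Union_pi0[of X U] openin_subset[OF U] by blast
  then have coeq: "is_set_coequaliser ?A ?B ?f ?g (G U) ?q"
    using cosheaf_coequaliser[OF G U] openin_pi0[OF lc U] by blast
  then have "s \<in> ?q ` ?B"
    using s is_set_coequaliser_image by blast
  then obtain D t where D: "D \<in> pi0 X U" "t \<in> G D" "s = Gm D U t"
    by auto
  show ?thesis
  proof (rule ex1I)
    show "D \<in> pi0 X U \<and> s \<in> Gm D U ` G D" using D by blast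
    fix D' assume "D' \<in> pi0 X U \<and> s \<in> Gm D' U ` G D'"
    then obtain t' where D': "D' \<in> pi0 X U" "t' \<in> G D'" "s = Gm D' U t'" by blast
    have "((D', t'), (D, t)) \<in> ({(?f a, ?g a) | a. a \<in> ?A} \<union> {(?g a, ?f a) | a. a \<in> ?A})\<^sup>*"
      using is_set_coequaliser_rtrancl[OF coeq, of "(D', t')" "(D, t)"] D D' by auto
    then have "fst (D', t') = fst (D, t)"
    proof (rule rtrancl_invariant)
      show "fst x = fst y"
        if "(x, y) \<in> {(?f a, ?g a) | a. a \<in> ?A} \<union> {(?g a, ?f a) | a. a \<in> ?A}" for x y
        using disjoint_cover_gluing_fst[OF cosheaf_empty[OF G] _ that]
          pairwise_disjoint_connected_components_of unfolding pi0_def by blast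
    qed
    then show "D' = D" by simp
  qed
qed

definition section_component ::
    "'a topology \<Rightarrow> ('a set \<Rightarrow> 'b set) \<Rightarrow> ('a set \<Rightarrow> 'a set \<Rightarrow> 'b \<Rightarrow> 'b) \<Rightarrow> 'a set \<Rightarrow> 'b \<Rightarrow> 'a set"
  where "section_component X G Gm U s = (THE D. D \<in> pi0 X U \<and> s \<in> Gm D U ` G D)"

context
  fixes X :: "'a topology" and G :: "'a set \<Rightarrow> 'b set" and Gm :: "'a set \<Rightarrow> 'a set \<Rightarrow> 'b \<Rightarrow> 'b"
  assumes lc: "locally_connected_space X" and G: "is_cosheaf X G Gm"
begin

lemma section_component:
  assumes "openin X U" "s \<in> G U"
  shows "section_component X G Gm U s \<in> pi0 X U"
    "s \<in> Gm (section_component X G Gm U s) U ` G (section_component X G Gm U s)"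
  using theI'[OF cosheaf_section_component_unique[OF lc G assms]]
  unfolding section_component_def by auto

lemma section_component_restrict:
  assumes U: "openin X U" and C: "openin X C" "connectedin X C" "C \<noteq> {}" "C \<subseteq> U"
    and t: "t \<in> G C"
  shows "section_component X G Gm U (Gm C U t) = pi0_map X V U C"
proof -
  have cp: "copresheaf_on X G Gm" using cosheaf_copresheaf[OF G] .
  let ?D = "pi0_map X V U C"
  have D: "?D \<in> pi0 X U" "C \<subseteq> ?D" "?D \<subseteq> U"
    using pi0_map_mem[OF C(2-4)] pi0_memD(2) by blast+
  have "openin X ?D" using openin_pi0[OF lc U D(1)] .
  then have "Gm C U t = Gm ?D U (Gm C ?D t)" "Gm C ?D t \<in> G ?D"
    using copresheaf_on_comp[OF cp U _ C(1) D(2,3) t] copresheaf_on_map_mem[OF cp _ C(1) D(2) t]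
    by auto
  moreover have "Gm ?D U t' \<in> G U" if "t' \<in> G ?D" for t'
    using copresheaf_on_map_mem[OF cp U \<open>openin X ?D\<close> D(3) that] .
  ultimately show ?thesis
    unfolding section_component_def
    using the1_equality[OF cosheaf_section_component_unique[OF lc G U], of "Gm C U t" ?D] D(1)
    by auto
qed

lemma section_componentE:
  assumes "openin X U" "s \<in> G U"
  obtains D t where "D \<in> pi0 X U" "openin X D" "connectedin X D" "D \<noteq> {}" "D \<subseteq> U"
    "t \<in> G D" "s = Gm D U t" "section_component X G Gm U s = D"
proof -
  let ?D = "section_component X G Gm U s"
  obtain t where "t \<in> G ?D" "s = Gm ?D U t"
    using section_component(2)[OF assms] by blast
  with section_component(1)[OF assms] show thesis
    using that openin_pi0[OF lc assms(1)] pi0_memD by metis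
qed

lemma nat_trans_section_component:
  "nat_trans_on X G Gm (pi0 X) (pi0_map X) (section_component X G Gm)"
  unfolding nat_trans_on_def
proof (intro conjI allI impI ballI Pi_I)
  fix U s assume "openin X U" "s \<in> G U"
  then show "section_component X G Gm U s \<in> pi0 X U" by (rule section_component(1))
next
  fix U V s assume UV: "openin X U \<and> openin X V \<and> V \<subseteq> U" and s: "s \<in> G V"
  then obtain D t where D: "openin X D" "connectedin X D" "D \<noteq> {}" "D \<subseteq> V"
    "t \<in> G D" "s = Gm D V t" "section_component X G Gm V s = D"
    using section_componentE by metis
  have "Gm V U s = Gm D U t"
    using copresheaf_on_comp[OF cosheaf_copresheaf[OF G], of U V D t] UV D by auto
  then show "section_component X G Gm U (Gm V U s) = pi0_map X V U (section_component X G Gm V s)"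
    using section_component_restrict[of U D t V] UV D by auto
qed

lemma nat_trans_to_pi0_unique:
  assumes \<eta>: "nat_trans_on X G Gm (pi0 X) (pi0_map X) \<eta>" and U: "openin X U" and s: "s \<in> G U"
  shows "\<eta> U s = section_component X G Gm U s"
proof -
  obtain D t where D: "D \<in> pi0 X U" "openin X D" "connectedin X D" "D \<noteq> {}" "D \<subseteq> U"
    "t \<in> G D" "s = Gm D U t" "section_component X G Gm U s = D"
    using section_componentE[OF U s] by blast
  have "\<eta> D t = D"
    using nat_trans_on_mem[OF \<eta> D(2,6)] pi0_connected[OF D(3,4)] by simp
  then have "\<eta> U s = pi0_map X D U D"
    using nat_trans_on_natural[OF \<eta> U D(2,5,6)] D(7) by simp
  also have "\<dots> = D"
    using pi0_map_eqI[OF D(1) subset_refl D(4)] .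
  finally show ?thesis using D(8) by simp
qed

end

theorem corollary2p5:
  fixes X :: "'a topology"
  assumes "locally_connected_space X"
  shows "is_cosheaf X (pi0 X) (pi0_map X) \<and>
    (\<forall>(G :: 'a set \<Rightarrow> 'b set) Gm. is_cosheaf X G Gm \<longrightarrow>
       (\<exists>\<eta>. nat_trans_on X G Gm (pi0 X) (pi0_map X) \<eta> \<and>
          (\<forall>\<eta>'. nat_trans_on X G Gm (pi0 X) (pi0_map X) \<eta>' \<longrightarrow>
             (\<forall>U. openin X U \<longrightarrow> (\<forall>s\<in>G U. \<eta>' U s = \<eta> U s)))))"
proof -
  have "nat_trans_on X G Gm (pi0 X) (pi0_map X) (section_component X G Gm) \<and>
    (\<forall>\<eta>'. nat_trans_on X G Gm (pi0 X) (pi0_map X) \<eta>' \<longrightarrow>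
       (\<forall>U. openin X U \<longrightarrow> (\<forall>s\<in>G U. \<eta>' U s = section_component X G Gm U s)))"
    if "is_cosheaf X G Gm" for G :: "'a set \<Rightarrow> 'b set" and Gm
    using nat_trans_section_component[OF assms that] nat_trans_to_pi0_unique[OF assms that]
    by blast
  then show ?thesis
    using pi0_is_cosheaf[OF assms] by blast
qed

end
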